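(* Fix $m\in\mathbb{Z}^+$ and $r\in\mathbb{N}$. Let $\mathsf{st}\colon X\to \mathbb{Z}$ be a function on a finite set $X$. If $$\sum_{x\in X:\ \mathsf{st}(x)\equiv l \pmod{2m}}\binom{\mathsf{st}(x)}{j}=\sum_{x\in X:\ \mathsf{st}(x)\equiv l+m \pmod{2m}}\binom{\mathsf{st}(x)}{j}$$ for every $l\in \mathbb{Z}_m$ and every $0\le j\le r-1$, then $\sum_{x\in X}q^{\mathsf{st}(x)}\in (1+q^m)^r\mathbb{Z}[q]$.
   Context: $\mathbb{Z}_m$ denotes the residues $\{0,1,\dots,m-1\}$. *)

theory Defs
  imports "HOL-Computational_Algebra.Polynomial" "HOL-Number_Theory.Cong"
begin

end

(*
  Write the exponents as e = st + N and split them by their residue l modulo m, so e = l + m t on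
  the class of l. That class contributes q^l A(q^m) with A(u) = \<Sum> u^t, hence it suffices that
  (1 + u)^r divides A, i.e. that the derivatives A^(j)(-1) vanish for j < r; up to a sign and j!,
  these are the alternating sums \<Sum> (-1)^t (t choose j). The parity of t tells whether st lies in the
  class l - N or l - N + m modulo 2m, and (t choose j) is a polynomial of degree j in st. So the
  alternating sums vanish once the hypothesis, stated for the basis (s gchoose j), j < r, is
  extended by linearity to all polynomials of degree < r and to all residues modulo 2m.
*)
theory Submission
  imports Defs
begin

lemma power_dvd_if_higher_pderiv_zero:
  fixes p :: "'a::{idom,semiring_char_0} poly"
  assumes "\<And>j. j < r \<Longrightarrow> poly ((pderiv ^^ j) p) a = 0"
  shows "[:-a, 1:] ^ r dvd p"
  using assms
proof (induction r arbitrary: p)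
  case 0
  then show ?case by simp
next
  case (Suc r)
  show ?case
  proof (cases "p = 0")
    case False
    have root: "poly p a = 0"
      using Suc.prems[of 0] by simp
    have "[:-a, 1:] ^ r dvd pderiv p"
      using Suc.prems[of "Suc _"] by (intro Suc.IH) (simp add: funpow_Suc_right del: funpow.simps)
    moreover have "pderiv p \<noteq> 0"
      using False root pderiv_iszero by force
    ultimately have "r \<le> order a (pderiv p)"
      by (simp add: order_divides)
    then show ?thesis
      using order_pderiv[OF False root] unfolding order_divides by simp
  qed simp
qed

lemma higher_pderiv_monom_one:
  "(pderiv ^^ j) (monom (1::'a::{comm_semiring_1,semiring_no_zero_divisors}) n) =
     monom (of_nat (fact j * (n choose j))) (n - j)"
proof (induction j)
  case (Suc j)
  have "(n - j) * (fact j * (n choose j)) = fact j * ((n - j) * (n choose j))"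
    by (simp only: mult.left_commute)
  also have "\<dots> = fact j * (Suc j * (n choose Suc j))"
    by (simp only: binomial_absorb_comp binomial_absorption)
  also have "\<dots> = fact (Suc j) * (n choose Suc j)"
    by (simp add: fact_Suc algebra_simps)
  finally have "(n - j) * (fact j * (n choose j)) = fact (Suc j) * (n choose Suc j)" .
  with Suc show ?case
    by (simp add: pderiv_monom flip: of_nat_mult)
qed simp

lemma poly_higher_pderiv_monom_one_at_minus_one:
  "poly ((pderiv ^^ j) (monom 1 n)) (-1 :: 'a::{idom,semiring_char_0}) =
     (-1) ^ j * fact j * ((-1) ^ n * of_nat (n choose j))"
proof (cases "j \<le> n")
  case True
  then have "(-1 :: 'a) ^ n = (-1) ^ j * (-1) ^ (n - j)"
    by (metis le_add_diff_inverse power_add)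
  then show ?thesis
    by (simp add: higher_pderiv_monom_one poly_monom)
qed (simp add: higher_pderiv_monom_one binomial_eq_0)

lemma one_plus_X_power_dvd_sum_monom:
  fixes t :: "'b \<Rightarrow> nat"
  assumes "\<And>j. j < r \<Longrightarrow> (\<Sum>x\<in>S. (-1) ^ t x * of_nat (t x choose j) :: 'a) = 0"
  shows "[:1, 1:] ^ r dvd (\<Sum>x\<in>S. monom (1::'a::{idom,semiring_char_0}) (t x))"
proof -
  have "poly ((pderiv ^^ j) (\<Sum>x\<in>S. monom 1 (t x))) (-1 :: 'a) = 0" if "j < r" for j
    using assms[OF that]
    by (simp add: higher_pderiv_sum poly_sum poly_higher_pderiv_monom_one_at_minus_one
        flip: sum_distrib_left)
  then show ?thesis
    using power_dvd_if_higher_pderiv_zero[of r _ "-1"] by auto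
qed

lemma pcompose_monom_one: "pcompose (monom 1 n) q = q ^ n"
  by (induction n) (simp_all add: monom_Suc pcompose_pCons monom_0)

lemma pcompose_power: "pcompose (p ^ n) q = pcompose p q ^ n"
  by (induction n) (simp_all add: pcompose_mult pcompose_1)

lemma one_plus_monom_power_dvd_sum_monom:
  fixes t :: "'b \<Rightarrow> nat"
  assumes "\<And>j. j < r \<Longrightarrow> (\<Sum>x\<in>S. (-1) ^ t x * of_nat (t x choose j) :: 'a) = 0"
  shows "(1 + monom 1 m) ^ r dvd (\<Sum>x\<in>S. monom (1::'a::{idom,semiring_char_0}) (l + m * t x))"
proof -
  obtain q where q: "(\<Sum>x\<in>S. monom (1::'a) (t x)) = [:1, 1:] ^ r * q"
    using one_plus_X_power_dvd_sum_monom[OF assms] by blast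
  have "(\<Sum>x\<in>S. monom (1::'a) (l + m * t x)) =
      monom 1 l * pcompose (\<Sum>x\<in>S. monom 1 (t x)) (monom 1 m)"
    by (simp add: pcompose_sum pcompose_monom_one monom_power mult_monom sum_distrib_left)
  also have "\<dots> = (1 + monom 1 m) ^ r * (monom 1 l * pcompose q (monom 1 m))"
    by (simp add: q pcompose_mult pcompose_power pcompose_pCons pCons_one pcompose_1)
  finally show ?thesis
    by simp
qed

definition gbinomial_poly :: "nat \<Rightarrow> 'a::field_char_0 poly"
  where "gbinomial_poly k = smult (inverse (fact k)) (\<Prod>i = 0..<k. [:- of_nat i, 1:])"

lemma poly_gbinomial_poly: "poly (gbinomial_poly k) a = a gchoose k"
  by (simp add: gbinomial_poly_def poly_prod gbinomial_mult_fact[symmetric] field_simps)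

lemma degree_gbinomial_poly: "degree (gbinomial_poly k) = k"
  by (simp add: gbinomial_poly_def degree_prod_eq_sum_degree)

lemma gbinomial_poly_nonzero: "gbinomial_poly k \<noteq> 0"
  by (simp add: gbinomial_poly_def prod_zero_iff)

lemma additive_functional_zero_below_degree:
  fixes L :: "'a::field poly \<Rightarrow> 'a" and B :: "nat \<Rightarrow> 'a poly"
  assumes L_add: "\<And>p q. L (p + q) = L p + L q"
    and L_smult: "\<And>c p. L (smult c p) = c * L p"
    and B: "\<And>j. j < r \<Longrightarrow> degree (B j) = j \<and> B j \<noteq> 0 \<and> L (B j) = 0"
  shows "degree p < r \<Longrightarrow> L p = 0"
proof (induction "degree p" arbitrary: p rule: less_induct)
  case less
  show ?case
  proof (cases "p = 0")
    case True
    then show ?thesis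
      using L_smult[of 0 0] by simp
  next
    case False
    define d where "d = degree p"
    define c where "c = lead_coeff p / lead_coeff (B d)"
    define p' where "p' = p - smult c (B d)"
    have Bd: "degree (B d) = d" "B d \<noteq> 0" "L (B d) = 0"
      using B less.prems by (simp_all add: d_def)
    have "coeff (B d) d \<noteq> 0"
      using Bd(1,2) leading_coeff_0_iff by metis
    then have "coeff p' d = 0"
      by (simp add: p'_def c_def Bd(1) flip: d_def)
    moreover have "degree p' \<le> d"
      using Bd by (simp add: p'_def d_def degree_diff_le)
    ultimately have "p' = 0 \<or> degree p' < degree p"
      by (metis d_def le_neq_implies_less leading_coeff_0_iff)
    then have "L p' = 0"
      using L_smult[of 0 0] less by auto
    moreover have "p = p' + smult c (B d)"
      by (simp add: p'_def)
    ultimately show ?thesis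
      using Bd by (simp add: L_add L_smult)
  qed
qed

definition balanced_mod :: "nat \<Rightarrow> 'a set \<Rightarrow> ('a \<Rightarrow> int) \<Rightarrow> (int \<Rightarrow> 'b::comm_monoid_add) \<Rightarrow> bool"
  where "balanced_mod m X st g \<longleftrightarrow> (\<forall>c.
    (\<Sum>x\<in>{x\<in>X. [st x = c] (mod 2 * int m)}. g (st x)) =
    (\<Sum>x\<in>{x\<in>X. [st x = c + int m] (mod 2 * int m)}. g (st x)))"

lemma balanced_modI:
  assumes "m > 0"
    and "\<And>l. l \<in> {0..<int m} \<Longrightarrow>
      (\<Sum>x\<in>{x\<in>X. [st x = l] (mod 2 * int m)}. g (st x)) =
      (\<Sum>x\<in>{x\<in>X. [st x = l + int m] (mod 2 * int m)}. g (st x))"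
  shows "balanced_mod m X st g"
  unfolding balanced_mod_def
proof
  fix c
  define l where "l = c mod (2 * int m)"
  have l_range: "0 \<le> l" "l < 2 * int m"
    using \<open>m > 0\<close> by (simp_all add: l_def)
  have cong_c: "[st x = c + k] (mod 2 * int m) \<longleftrightarrow> [st x = l + k] (mod 2 * int m)" for x k
    by (simp add: l_def cong_def mod_add_left_eq)
  show "(\<Sum>x\<in>{x\<in>X. [st x = c] (mod 2 * int m)}. g (st x)) =
      (\<Sum>x\<in>{x\<in>X. [st x = c + int m] (mod 2 * int m)}. g (st x))"
  proof (cases "l < int m")
    case True
    then show ?thesis
      using assms(2)[of l] cong_c[of _ 0] cong_c[of _ "int m"] l_range by simp
  next
    case False
    have "l + int m = (l - int m) + 2 * int m"
      by simp
    then have "[st x = l + int m] (mod 2 * int m) \<longleftrightarrow> [st x = l - int m] (mod 2 * int m)" for x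
      by (simp only: cong_def mod_add_self2)
    then show ?thesis
      using assms(2)[of "l - int m"] cong_c[of _ 0] cong_c[of _ "int m"] l_range False by simp
  qed
qed

lemma balanced_mod_poly:
  fixes P :: "'a::field_char_0 poly"
  assumes "\<And>j. j < r \<Longrightarrow> balanced_mod m X st (\<lambda>s. (of_int s :: 'a) gchoose j)"
    and "degree P < r"
  shows "balanced_mod m X st (\<lambda>s. poly P (of_int s))"
  unfolding balanced_mod_def
proof
  fix c
  define L where "L p = (\<Sum>x\<in>{x\<in>X. [st x = c] (mod 2 * int m)}. poly p (of_int (st x))) -
      (\<Sum>x\<in>{x\<in>X. [st x = c + int m] (mod 2 * int m)}. poly p (of_int (st x)))" for p :: "'a poly"
  have "L P = 0"
  proof (rule additive_functional_zero_below_degree[where B = gbinomial_poly])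
    show "L (p + q) = L p + L q" for p q
      by (simp add: L_def sum.distrib)
    show "L (smult a p) = a * L p" for a p
      by (simp add: L_def sum_distrib_left right_diff_distrib)
    show "degree (gbinomial_poly j) = j \<and> gbinomial_poly j \<noteq> 0 \<and> L (gbinomial_poly j) = 0"
      if "j < r" for j
      using assms(1)[OF that]
      by (simp add: degree_gbinomial_poly gbinomial_poly_nonzero L_def poly_gbinomial_poly balanced_mod_def)
  qed (fact assms(2))
  then show "(\<Sum>x\<in>{x\<in>X. [st x = c] (mod 2 * int m)}. poly P (of_int (st x))) =
      (\<Sum>x\<in>{x\<in>X. [st x = c + int m] (mod 2 * int m)}. poly P (of_int (st x)))"
    by (simp add: L_def)
qed

lemma balanced_mod_poly_shift:
  fixes P :: "'a::field_char_0 poly"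
  assumes bal: "\<And>Q :: 'a poly. degree Q < r \<Longrightarrow> balanced_mod m X st (\<lambda>s. poly Q (of_int s))"
    and shift: "\<And>x. x \<in> X \<Longrightarrow> st' x = st x + N"
    and "degree P < r"
  shows "balanced_mod m X st' (\<lambda>s. poly P (of_int s))"
  unfolding balanced_mod_def
proof
  fix c
  define Q where "Q = pcompose P [:of_int N, 1:]"
  have "degree Q < r"
    using \<open>degree P < r\<close> by (simp add: Q_def degree_pcompose)
  then have bal_Q: "(\<Sum>x\<in>{x\<in>X. [st x = c - N] (mod 2 * int m)}. poly Q (of_int (st x))) =
      (\<Sum>x\<in>{x\<in>X. [st x = c - N + int m] (mod 2 * int m)}. poly Q (of_int (st x)))"
    using bal unfolding balanced_mod_def by blast
  have "[st' x = c + k] (mod 2 * int m) \<longleftrightarrow> [st x = c - N + k] (mod 2 * int m)"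
    if "x \<in> X" for x k
    using cong_add_rcancel[of "st x" N "c - N + k"] shift[OF that] by simp
  then have classes: "{x\<in>X. [st' x = c + k] (mod 2 * int m)} = {x\<in>X. [st x = c - N + k] (mod 2 * int m)}"
    for k
    by blast
  have "poly P (of_int (st' x)) = poly Q (of_int (st x))" if "x \<in> X" for x
    using shift[OF that] by (simp add: Q_def poly_pcompose algebra_simps)
  then have sum_eq: "(\<Sum>x\<in>{x\<in>X. [st' x = c + k] (mod 2 * int m)}. poly P (of_int (st' x))) =
      (\<Sum>x\<in>{x\<in>X. [st x = c - N + k] (mod 2 * int m)}. poly Q (of_int (st x)))" for k
    unfolding classes by (intro sum.cong) auto
  show "(\<Sum>x\<in>{x\<in>X. [st' x = c] (mod 2 * int m)}. poly P (of_int (st' x))) =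
      (\<Sum>x\<in>{x\<in>X. [st' x = c + int m] (mod 2 * int m)}. poly P (of_int (st' x)))"
    using sum_eq[of 0] sum_eq[of "int m"] bal_Q by simp
qed

lemma mod_double_eq_iff:
  fixes e l m :: nat
  assumes "l < m"
  shows "e mod (2 * m) = l \<longleftrightarrow> e mod m = l \<and> even (e div m)"
    and "e mod (2 * m) = l + m \<longleftrightarrow> e mod m = l \<and> odd (e div m)"
proof -
  have "e mod (2 * m) = m * (e div m mod 2) + e mod m"
    using mod_mult2_eq[of e m 2] by (simp add: mult.commute)
  moreover have "e mod m < m"
    using assms by simp
  ultimately have "e mod (2 * m) = (if even (e div m) then e mod m else e mod m + m)"
    by (auto simp: even_iff_mod_2_eq_zero odd_iff_mod_2_eq_one)
  with \<open>e mod m < m\<close> assms show "e mod (2 * m) = l \<longleftrightarrow> e mod m = l \<and> even (e div m)"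
    and "e mod (2 * m) = l + m \<longleftrightarrow> e mod m = l \<and> odd (e div m)"
    by (auto simp del: mod_less_divisor)
qed

lemma alternating_sum_eq_0_if_balanced_mod:
  fixes e :: "'a \<Rightarrow> nat" and g :: "int \<Rightarrow> 'b::comm_ring_1"
  assumes bal: "balanced_mod m X (\<lambda>x. int (e x)) g" and "finite X" and "l < m"
  shows "(\<Sum>x\<in>{x\<in>X. e x mod m = l}. (-1) ^ (e x div m) * g (int (e x))) = 0"
proof -
  define Xl where "Xl = {x\<in>X. e x mod m = l}"
  have cong_iff: "[int (e x) = int l + int k] (mod 2 * int m) \<longleftrightarrow> e x mod (2 * m) = l + k"
    if "l + k < 2 * m" for x k
    using that cong_int_iff[of "e x" "l + k" "2 * m"] by (simp add: cong_def)
  have even_part: "Xl \<inter> {x. even (e x div m)} = {x\<in>X. [int (e x) = int l] (mod 2 * int m)}"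
    using cong_iff[where k = 0] mod_double_eq_iff(1)[OF \<open>l < m\<close>] \<open>l < m\<close> by (auto simp: Xl_def)
  have odd_part: "Xl \<inter> - {x. even (e x div m)} = {x\<in>X. [int (e x) = int l + int m] (mod 2 * int m)}"
    using cong_iff[where k = m] mod_double_eq_iff(2)[OF \<open>l < m\<close>] \<open>l < m\<close> by (auto simp: Xl_def)
  have "(\<Sum>x\<in>Xl. (-1) ^ (e x div m) * g (int (e x))) =
      (\<Sum>x\<in>Xl. if even (e x div m) then g (int (e x)) else - g (int (e x)))"
    by (rule sum.cong) auto
  also have "\<dots> = (\<Sum>x\<in>Xl \<inter> {x. even (e x div m)}. g (int (e x))) +
      (\<Sum>x\<in>Xl \<inter> - {x. even (e x div m)}. - g (int (e x)))"
    by (rule sum.If_cases) (simp add: Xl_def \<open>finite X\<close>)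
  also have "\<dots> = 0"
    using bal unfolding even_part odd_part balanced_mod_def by (simp add: sum_negf)
  finally show ?thesis
    unfolding Xl_def .
qed

lemma alternating_binomial_sum_eq_0:
  fixes e :: "'a \<Rightarrow> nat"
  assumes bal: "\<And>P :: 'b::field_char_0 poly. degree P < r \<Longrightarrow>
      balanced_mod m X (\<lambda>x. int (e x)) (\<lambda>s. poly P (of_int s))"
    and "finite X" and "l < m" and "j < r"
  shows "(\<Sum>x\<in>{x\<in>X. e x mod m = l}. (-1) ^ (e x div m) * of_nat (e x div m choose j) :: int) = 0"
proof -
  define P :: "'b poly" where "P = pcompose (gbinomial_poly j) [:- of_nat l / of_nat m, 1 / of_nat m:]"
  have "degree P < r"
    using \<open>l < m\<close> \<open>j < r\<close> by (simp add: P_def degree_pcompose degree_gbinomial_poly)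
  have poly_P: "poly P (of_nat (e x)) = of_nat (e x div m choose j)" if "e x mod m = l" for x
  proof -
    have "of_nat (e x) = (of_nat l + of_nat m * of_nat (e x div m) :: 'b)"
      using that div_mult_mod_eq[of "e x" m] by (metis add.commute mult.commute of_nat_add of_nat_mult)
    then have "poly [:- of_nat l / of_nat m, 1 / of_nat m:] (of_nat (e x)) = (of_nat (e x div m) :: 'b)"
      using \<open>l < m\<close> by (simp add: field_simps)
    then show ?thesis
      by (simp add: P_def poly_pcompose poly_gbinomial_poly binomial_gbinomial)
  qed
  have "(of_int (\<Sum>x\<in>{x\<in>X. e x mod m = l}. (-1) ^ (e x div m) * of_nat (e x div m choose j)) :: 'b)
      = (\<Sum>x\<in>{x\<in>X. e x mod m = l}. (-1) ^ (e x div m) * poly P (of_int (int (e x))))"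
    unfolding of_int_sum by (intro sum.cong) (simp_all add: poly_P)
  also have "\<dots> = 0"
    using bal[OF \<open>degree P < r\<close>] \<open>finite X\<close> \<open>l < m\<close> by (rule alternating_sum_eq_0_if_balanced_mod)
  finally show ?thesis
    by (simp only: of_int_eq_0_iff)
qed

lemma one_plus_monom_power_dvd_if_balanced_mod:
  fixes e :: "'a \<Rightarrow> nat"
  assumes bal: "\<And>P :: 'b::field_char_0 poly. degree P < r \<Longrightarrow>
      balanced_mod m X (\<lambda>x. int (e x)) (\<lambda>s. poly P (of_int s))"
    and "finite X" and "m > 0"
  shows "(1 + monom 1 m) ^ r dvd (\<Sum>x\<in>X. monom (1::int) (e x))"
proof -
  have "(1 + monom 1 m) ^ r dvd (\<Sum>x\<in>{x\<in>X. e x mod m = l}. monom (1::int) (e x))"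
    if "l < m" for l
  proof -
    have "(1 + monom 1 m) ^ r dvd (\<Sum>x\<in>{x\<in>X. e x mod m = l}. monom (1::int) (l + m * (e x div m)))"
      using alternating_binomial_sum_eq_0[OF bal \<open>finite X\<close> that]
      by (rule one_plus_monom_power_dvd_sum_monom)
    also have "\<dots> = (\<Sum>x\<in>{x\<in>X. e x mod m = l}. monom 1 (e x))"
      by (intro sum.cong) (auto simp: mod_mult_div_eq)
    finally show ?thesis .
  qed
  then have "(1 + monom 1 m) ^ r dvd (\<Sum>l<m. \<Sum>x\<in>{x\<in>X. e x mod m = l}. monom (1::int) (e x))"
    by (meson dvd_sum lessThan_iff)
  also have "\<dots> = (\<Sum>x\<in>X. monom 1 (e x))"
    using \<open>finite X\<close> \<open>m > 0\<close> by (intro sum.group) auto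
  finally show ?thesis .
qed

theorem proposition4p7:
  fixes X :: "'a set" and st :: "'a \<Rightarrow> int" and m r :: nat
  assumes "m > 0" and "finite X"
    and hyp: "\<And>l j. l \<in> {0..<int m} \<Longrightarrow> j < r \<Longrightarrow>
      (\<Sum>x\<in>{x\<in>X. [st x = l] (mod (2 * int m))}. (of_int (st x) :: rat) gchoose j)
      = (\<Sum>x\<in>{x\<in>X. [st x = l + int m] (mod (2 * int m))}. (of_int (st x) :: rat) gchoose j)"
  shows "\<forall>N::int. (\<forall>x\<in>X. st x + N \<ge> 0) \<longrightarrow>
    (1 + monom (1::int) m) ^ r dvd (\<Sum>x\<in>X. monom (1::int) (nat (st x + N)))"
proof (intro allI impI)
  fix N :: int
  assume nonneg: "\<forall>x\<in>X. st x + N \<ge> 0"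
  define e where "e x = nat (st x + N)" for x
  have e_shift: "int (e x) = st x + N" if "x \<in> X" for x
    using nonneg that by (simp add: e_def)
  have "balanced_mod m X st (\<lambda>s. (of_int s :: rat) gchoose j)" if "j < r" for j
    using \<open>m > 0\<close> hyp[OF _ that] by (rule balanced_modI)
  then have "balanced_mod m X st (\<lambda>s. poly P (of_int s))" if "degree P < r" for P :: "rat poly"
    using that by (rule balanced_mod_poly)
  then have "balanced_mod m X (\<lambda>x. int (e x)) (\<lambda>s. poly P (of_int s))"
    if "degree P < r" for P :: "rat poly"
    using e_shift that by (rule balanced_mod_poly_shift)
  then have "(1 + monom 1 m) ^ r dvd (\<Sum>x\<in>X. monom (1::int) (e x))"
    using \<open>finite X\<close> \<open>m > 0\<close> by (rule one_plus_monom_power_dvd_if_balanced_mod)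
  then show "(1 + monom (1::int) m) ^ r dvd (\<Sum>x\<in>X. monom (1::int) (nat (st x + N)))"
    by (simp add: e_def)
qed

end
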